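(* Let $G=(V,E)$ be a connected chordal graph with at least two vertices and let $v\in V$. Then: (1) $v\in\mathrm{core}(G)$ if and only if $v\in V^+$; (2) $v\in\mathrm{anticore}(G)$ if and only if $\gamma(G_v+u)=\gamma(G)+1$; (3) $v\in\mathrm{corona}(G)\setminus\mathrm{core}(G)$ if and only if either $v\in V^-$, or $v\in V^0$ and $\gamma(G_v+u)=\gamma(G)$.
   Context: All graphs are finite, simple and undirected. A graph is chordal if it has no induced cycle of length at least four. $\gamma(G)$ is the domination number; a minimum dominating set (mds) is a dominating set of size $\gamma(G)$. $\mathrm{core}(G)$ is the set of vertices in every mds, $\mathrm{corona}(G)$ the set of vertices in at least one mds, $\mathrm{anticore}(G)=V\setminus\mathrm{corona}(G)$. With $G-v$ denoting $G$ with $v$ deleted: $V^+=\{v:\gamma(G-v)>\gamma(G)\}$, $V^0=\{v:\gamma(G-v)=\gamma(G)\}$, $V^-=\{v:\gamma(G-v)<\gamma(G)\}$. $G_v+u$ is the graph obtained from $G$ by adding a new vertex $u$ and the single edge $uv$. *)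

theory Defs
  imports Main
begin

definition simple_graph :: "'a set \<Rightarrow> ('a \<Rightarrow> 'a \<Rightarrow> bool) \<Rightarrow> bool" where
  "simple_graph V E \<longleftrightarrow> finite V \<and> (\<forall>x y. E x y \<longrightarrow> x \<in> V \<and> y \<in> V)
     \<and> (\<forall>x y. E x y \<longrightarrow> E y x) \<and> (\<forall>x. \<not> E x x)"

definition connected_graph :: "'a set \<Rightarrow> ('a \<Rightarrow> 'a \<Rightarrow> bool) \<Rightarrow> bool" where
  "connected_graph V E \<longleftrightarrow> (\<forall>x\<in>V. \<forall>y\<in>V. E\<^sup>*\<^sup>* x y)"

definition induced_cycle :: "'a set \<Rightarrow> ('a \<Rightarrow> 'a \<Rightarrow> bool) \<Rightarrow> 'a list \<Rightarrow> bool" where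
  "induced_cycle V E xs \<longleftrightarrow> distinct xs \<and> set xs \<subseteq> V \<and> length xs \<ge> 3 \<and>
     (\<forall>i<length xs. \<forall>j<length xs.
        E (xs ! i) (xs ! j) \<longleftrightarrow> (j = Suc i mod length xs \<or> i = Suc j mod length xs))"

definition chordal :: "'a set \<Rightarrow> ('a \<Rightarrow> 'a \<Rightarrow> bool) \<Rightarrow> bool" where
  "chordal V E \<longleftrightarrow> \<not> (\<exists>xs. induced_cycle V E xs \<and> length xs \<ge> 4)"

definition dominating :: "'a set \<Rightarrow> ('a \<Rightarrow> 'a \<Rightarrow> bool) \<Rightarrow> 'a set \<Rightarrow> bool" where
  "dominating V E D \<longleftrightarrow> D \<subseteq> V \<and> (\<forall>x\<in>V. x \<in> D \<or> (\<exists>y\<in>D. E x y))"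

definition domination_number :: "'a set \<Rightarrow> ('a \<Rightarrow> 'a \<Rightarrow> bool) \<Rightarrow> nat" where
  "domination_number V E = Min (card ` {D. dominating V E D})"

definition mds :: "'a set \<Rightarrow> ('a \<Rightarrow> 'a \<Rightarrow> bool) \<Rightarrow> 'a set \<Rightarrow> bool" where
  "mds V E D \<longleftrightarrow> dominating V E D \<and> card D = domination_number V E"

definition core :: "'a set \<Rightarrow> ('a \<Rightarrow> 'a \<Rightarrow> bool) \<Rightarrow> 'a set" where
  "core V E = {v \<in> V. \<forall>D. mds V E D \<longrightarrow> v \<in> D}"

definition corona :: "'a set \<Rightarrow> ('a \<Rightarrow> 'a \<Rightarrow> bool) \<Rightarrow> 'a set" where
  "corona V E = {v \<in> V. \<exists>D. mds V E D \<and> v \<in> D}"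

definition anticore :: "'a set \<Rightarrow> ('a \<Rightarrow> 'a \<Rightarrow> bool) \<Rightarrow> 'a set" where
  "anticore V E = V - corona V E"

definition del_vertex_edges :: "('a \<Rightarrow> 'a \<Rightarrow> bool) \<Rightarrow> 'a \<Rightarrow> ('a \<Rightarrow> 'a \<Rightarrow> bool)" where
  "del_vertex_edges E v = (\<lambda>x y. E x y \<and> x \<noteq> v \<and> y \<noteq> v)"

definition gamma_del :: "'a set \<Rightarrow> ('a \<Rightarrow> 'a \<Rightarrow> bool) \<Rightarrow> 'a \<Rightarrow> nat" where
  "gamma_del V E v = domination_number (V - {v}) (del_vertex_edges E v)"

definition V_plus :: "'a set \<Rightarrow> ('a \<Rightarrow> 'a \<Rightarrow> bool) \<Rightarrow> 'a set" where
  "V_plus V E = {v \<in> V. gamma_del V E v > domination_number V E}"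

definition V_zero :: "'a set \<Rightarrow> ('a \<Rightarrow> 'a \<Rightarrow> bool) \<Rightarrow> 'a set" where
  "V_zero V E = {v \<in> V. gamma_del V E v = domination_number V E}"

definition V_minus :: "'a set \<Rightarrow> ('a \<Rightarrow> 'a \<Rightarrow> bool) \<Rightarrow> 'a set" where
  "V_minus V E = {v \<in> V. gamma_del V E v < domination_number V E}"

text \<open>G_v + u: add a new vertex u (assumed not in V) and the single edge uv.\<close>
definition add_pendant_edges :: "('a \<Rightarrow> 'a \<Rightarrow> bool) \<Rightarrow> 'a \<Rightarrow> 'a \<Rightarrow> ('a \<Rightarrow> 'a \<Rightarrow> bool)" where
  "add_pendant_edges E v u = (\<lambda>x y. E x y \<or> (x = u \<and> y = v) \<or> (x = v \<and> y = u))"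

definition gamma_pendant :: "'a set \<Rightarrow> ('a \<Rightarrow> 'a \<Rightarrow> bool) \<Rightarrow> 'a \<Rightarrow> 'a \<Rightarrow> nat" where
  "gamma_pendant V E v u = domination_number (insert u V) (add_pendant_edges E v u)"

end

theory Submission
  imports Defs
begin

text \<open>
  Parts (2), (3) and the easy half of (1) hold in every graph: if \<open>\<gamma>(G - v) > \<gamma>(G)\<close> then
  \<open>v\<close> lies in every mds, if \<open>\<gamma>(G - v) < \<gamma>(G)\<close> then an mds of \<open>G - v\<close> plus \<open>v\<close> is an mds
  of \<open>G\<close>, and since the pendant vertex \<open>u\<close> forces \<open>u\<close> or \<open>v\<close> into every dominating set of
  \<open>G\<^sub>v + u\<close>, \<open>\<gamma>(G\<^sub>v + u) = \<gamma>(G)\<close> exactly when \<open>v\<close> lies in some mds.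

  The substance is that a core vertex \<open>v\<close> of a connected chordal graph satisfies
  \<open>\<gamma>(G - v) > \<gamma>(G)\<close>. Otherwise take an mds \<open>Y\<close> of \<open>G - v\<close> and an mds \<open>D\<close> of \<open>G\<close>, so
  \<open>v \<in> D\<close>. Any dominating set of \<open>G\<close> with at most \<open>\<gamma>(G)\<close> vertices must contain \<open>v\<close>; hence
  \<open>Y\<close> lies in the set \<open>W\<close> of vertices at distance at least two from \<open>v\<close>, and no dominating
  set of \<open>G - v\<close> has fewer than \<open>\<gamma>(G)\<close> vertices (add a neighbour of \<open>v\<close>). For a component
  \<open>C\<close> of \<open>G[W]\<close>, its attachments in \<open>N(v)\<close> form a nonempty clique: nonempty by
  connectivity, a clique because a shortest path through \<open>C\<close> between two non-adjacent
  attachments would close up with \<open>v\<close> to an induced cycle of length at least four. If \<open>D\<close>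
  contains no attachment of \<open>C\<close>, then \<open>|Y \<inter> C| \<le> |D \<inter> C|\<close>, for otherwise \<open>Y\<close> with \<open>Y \<inter> C\<close>
  replaced by \<open>D \<inter> C\<close> and one attachment would dominate \<open>G\<close> without \<open>v\<close>. Using \<open>Y\<close> on these
  components and \<open>D - v\<close> elsewhere then dominates \<open>G - v\<close> with fewer than \<open>\<gamma>(G)\<close> vertices.
\<close>

section \<open>Minimum dominating sets\<close>

lemma simple_graph_finite: "simple_graph V E \<Longrightarrow> finite V"
  unfolding simple_graph_def by blast

lemma dominating_finite: "finite V \<Longrightarrow> dominating V E D \<Longrightarrow> finite D"
  unfolding dominating_def by (auto intro: finite_subset)

lemma finite_dominating_sets: "finite V \<Longrightarrow> finite {D. dominating V E D}"
  by (rule finite_subset[of _ "Pow V"]) (auto simp: dominating_def)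

lemma domination_number_le_card:
  assumes "finite V" and "dominating V E D"
  shows "domination_number V E \<le> card D"
proof -
  have "finite {D. dominating V E D}"
    using assms(1) by (rule finite_dominating_sets)
  then show ?thesis
    unfolding domination_number_def using assms(2) by (auto intro: Min_le)
qed

lemma mds_exists:
  assumes "finite V"
  obtains D where "mds V E D"
proof -
  have "finite {D. dominating V E D}"
    using assms by (rule finite_dominating_sets)
  moreover have "dominating V E V"
    by (simp add: dominating_def)
  ultimately have "domination_number V E \<in> card ` {D. dominating V E D}"
    unfolding domination_number_def by (intro Min_in) auto
  then show ?thesis
    using that unfolding mds_def by auto
qed

lemma mds_if_card_le:
  assumes "finite V" and "dominating V E D" and "card D \<le> domination_number V E"
  shows "mds V E D"
  using assms domination_number_le_card[OF assms(1,2)] unfolding mds_def by simp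

lemma dominating_del_vertex_iff:
  "dominating (V - {v}) (del_vertex_edges E v) D \<longleftrightarrow>
     D \<subseteq> V - {v} \<and> (\<forall>x\<in>V - {v}. x \<in> D \<or> (\<exists>y\<in>D. E x y))"
  unfolding dominating_def del_vertex_edges_def by blast

lemma core_if_gamma_del_greater:
  assumes "finite V" and "v \<in> V" and "domination_number V E < gamma_del V E v"
  shows "v \<in> core V E"
proof -
  have "v \<in> D" if "mds V E D" for D
  proof (rule ccontr)
    assume "v \<notin> D"
    with that have "dominating (V - {v}) (del_vertex_edges E v) D"
      unfolding dominating_del_vertex_iff by (auto simp: mds_def dominating_def)
    then have "gamma_del V E v \<le> card D"
      unfolding gamma_del_def using assms(1) by (simp add: domination_number_le_card)
    with that assms(3) show False
      unfolding mds_def by simp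
  qed
  with assms(2) show ?thesis
    unfolding core_def by blast
qed

lemma corona_if_gamma_del_less:
  assumes "finite V" and "v \<in> V" and "gamma_del V E v < domination_number V E"
  shows "v \<in> corona V E"
proof -
  obtain Y where Y: "mds (V - {v}) (del_vertex_edges E v) Y"
    using mds_exists[of "V - {v}"] assms(1) by blast
  then have "dominating V E (insert v Y)"
    using assms(2) unfolding mds_def dominating_del_vertex_iff by (auto simp: dominating_def)
  moreover have "card (insert v Y) \<le> domination_number V E"
  proof -
    have "finite Y"
      using Y dominating_finite[of "V - {v}"] assms(1) unfolding mds_def by blast
    then have "card (insert v Y) \<le> Suc (card Y)"
      by (simp add: card_insert_if)
    with Y assms(3) show ?thesis
      unfolding mds_def gamma_del_def by simp
  qed
  ultimately have "mds V E (insert v Y)"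
    by (rule mds_if_card_le[OF assms(1)])
  then show ?thesis
    unfolding corona_def using assms(2) by blast
qed

lemma dominating_from_pendant:
  assumes "simple_graph V E" and "v \<in> V" and "u \<notin> V"
    and D: "dominating (insert u V) (add_pendant_edges E v u) D"
  shows "dominating V E (insert v (D - {u}))" and "card (insert v (D - {u})) \<le> card D"
proof -
  have EV: "\<And>x y. E x y \<Longrightarrow> x \<in> V \<and> y \<in> V" and "finite V"
    using assms(1) unfolding simple_graph_def by blast+
  have DV: "D \<subseteq> insert u V" and Ddom: "\<And>x. x \<in> insert u V \<Longrightarrow> x \<in> D \<or> (\<exists>y\<in>D. add_pendant_edges E v u x y)"
    using D unfolding dominating_def by blast+
  have "x \<in> insert v (D - {u}) \<or> (\<exists>y\<in>insert v (D - {u}). E x y)" if "x \<in> V" for x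
  proof -
    have "x \<noteq> u"
      using that assms(3) by blast
    moreover have "E x y \<Longrightarrow> y \<noteq> u" for y
      using EV assms(3) by blast
    ultimately show ?thesis
      using Ddom[of x] that unfolding add_pendant_edges_def by blast
  qed
  moreover have "insert v (D - {u}) \<subseteq> V"
    using DV assms(2) by blast
  ultimately show "dominating V E (insert v (D - {u}))"
    unfolding dominating_def by blast
  show "card (insert v (D - {u})) \<le> card D"
  proof (cases "u \<in> D")
    case True
    moreover have "finite D"
      using D dominating_finite[of "insert u V"] \<open>finite V\<close> by blast
    ultimately have "Suc (card (D - {u})) = card D"
      by (rule card_Suc_Diff1[rotated])
    moreover have "card (insert v (D - {u})) \<le> Suc (card (D - {u}))"
      using \<open>finite D\<close> by (simp add: card_insert_if)
    ultimately show ?thesis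
      by simp
  next
    case False
    then obtain y where "y \<in> D" "add_pendant_edges E v u u y"
      using Ddom[of u] by blast
    then have "v \<in> D"
      using EV assms(3) unfolding add_pendant_edges_def by blast
    with False show ?thesis
      by (simp add: insert_absorb)
  qed
qed

lemma domination_number_le_gamma_pendant:
  assumes "simple_graph V E" and "v \<in> V" and "u \<notin> V"
  shows "domination_number V E \<le> gamma_pendant V E v u"
proof -
  have "finite V"
    using assms(1) by (rule simple_graph_finite)
  then obtain D where D: "mds (insert u V) (add_pendant_edges E v u) D"
    using mds_exists[of "insert u V"] by blast
  then have "dominating V E (insert v (D - {u}))" and "card (insert v (D - {u})) \<le> card D"
    using dominating_from_pendant[OF assms] unfolding mds_def by blast+
  then have "domination_number V E \<le> card D"
    using domination_number_le_card[OF \<open>finite V\<close>] order_trans by blast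
  with D show ?thesis
    unfolding mds_def gamma_pendant_def by simp
qed

lemma gamma_pendant_le_Suc:
  assumes "finite V"
  shows "gamma_pendant V E v u \<le> domination_number V E + 1"
proof -
  obtain D where D: "mds V E D"
    using mds_exists[OF assms] by blast
  then have "dominating (insert u V) (add_pendant_edges E v u) (insert u D)"
    unfolding mds_def dominating_def add_pendant_edges_def by blast
  then have "gamma_pendant V E v u \<le> card (insert u D)"
    unfolding gamma_pendant_def using assms by (simp add: domination_number_le_card)
  also have "\<dots> \<le> domination_number V E + 1"
  proof -
    have "finite D"
      using D dominating_finite[OF assms] unfolding mds_def by blast
    with D show ?thesis
      unfolding mds_def by (simp add: card_insert_if)
  qed
  finally show ?thesis .
qed

lemma corona_iff_gamma_pendant_eq:
  assumes "simple_graph V E" and "v \<in> V" and "u \<notin> V"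
  shows "v \<in> corona V E \<longleftrightarrow> gamma_pendant V E v u = domination_number V E"
proof
  assume "v \<in> corona V E"
  then obtain D where D: "mds V E D" "v \<in> D"
    unfolding corona_def by blast
  then have "dominating (insert u V) (add_pendant_edges E v u) D"
    unfolding mds_def dominating_def add_pendant_edges_def by blast
  then have "gamma_pendant V E v u \<le> card D"
    unfolding gamma_pendant_def using simple_graph_finite[OF assms(1)]
    by (simp add: domination_number_le_card)
  with D(1) domination_number_le_gamma_pendant[OF assms]
  show "gamma_pendant V E v u = domination_number V E"
    unfolding mds_def by simp
next
  assume eq: "gamma_pendant V E v u = domination_number V E"
  have "finite V"
    using assms(1) by (rule simple_graph_finite)
  then obtain D where D: "mds (insert u V) (add_pendant_edges E v u) D"
    using mds_exists[of "insert u V"] by blast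
  then have "dominating V E (insert v (D - {u}))" and "card (insert v (D - {u})) \<le> card D"
    using dominating_from_pendant[OF assms] unfolding mds_def by blast+
  moreover have "card D = domination_number V E"
    using D eq unfolding mds_def gamma_pendant_def by simp
  ultimately have "mds V E (insert v (D - {u}))"
    using mds_if_card_le[OF \<open>finite V\<close>] by simp
  with assms(2) show "v \<in> corona V E"
    unfolding corona_def by blast
qed

section \<open>Shortest walks in chordal graphs\<close>

abbreviation induced_edges :: "('a \<Rightarrow> 'a \<Rightarrow> bool) \<Rightarrow> 'a set \<Rightarrow> 'a \<Rightarrow> 'a \<Rightarrow> bool" where
  "induced_edges E W \<equiv> \<lambda>x y. E x y \<and> x \<in> W \<and> y \<in> W"

definition walk_through :: "('a \<Rightarrow> 'a \<Rightarrow> bool) \<Rightarrow> 'a set \<Rightarrow> (nat \<Rightarrow> 'a) \<Rightarrow> nat \<Rightarrow> bool" where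
  "walk_through E W p n \<longleftrightarrow> (\<forall>i<n. E (p i) (p (Suc i))) \<and> (\<forall>i. 0 < i \<and> i < n \<longrightarrow> p i \<in> W)"

lemma walk_through_prefix:
  "walk_through E W p n \<Longrightarrow> m \<le> n \<Longrightarrow> walk_through E W p m"
  unfolding walk_through_def by simp

lemma walk_through_Cons:
  assumes "walk_through E W p n" and "E a (p 0)" and "0 < n \<Longrightarrow> p 0 \<in> W"
  shows "walk_through E W (case_nat a p) (Suc n)"
  unfolding walk_through_def
proof (intro conjI allI impI)
  fix i assume "i < Suc n"
  then show "E (case_nat a p i) (case_nat a p (Suc i))"
    using assms(1,2) unfolding walk_through_def by (cases i) auto
next
  fix i assume "0 < i \<and> i < Suc n"
  then obtain k where "i = Suc k" "k < n"
    using gr0_implies_Suc by auto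
  then show "case_nat a p i \<in> W"
    using assms(1,3) unfolding walk_through_def by (cases k) auto
qed

lemma walk_through_shortcut:
  assumes walk: "walk_through E W p n" and ij: "i < j" "j \<le> n" and chord: "E (p i) (p j)"
  defines "d \<equiv> j - Suc i"
  shows "walk_through E W (\<lambda>k. if k \<le> i then p k else p (k + d)) (n - d)"
  unfolding walk_through_def
proof (intro conjI allI impI)
  fix k assume "k < n - d"
  then consider "k < i" | "k = i" | "i < k" "k + d < n"
    using ij unfolding d_def by linarith
  then show "E (if k \<le> i then p k else p (k + d)) (if Suc k \<le> i then p (Suc k) else p (Suc k + d))"
  proof cases
    case 3
    then show ?thesis
      using walk unfolding walk_through_def by auto
  qed (use walk ij chord d_def in \<open>auto simp: walk_through_def\<close>)
next
  fix k assume "0 < k \<and> k < n - d"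
  then show "(if k \<le> i then p k else p (k + d)) \<in> W"
    using walk ij unfolding walk_through_def d_def by auto
qed

lemma shortest_walk_through_chordless:
  assumes "simple_graph V E" and walk: "walk_through E W p n"
    and shortest: "\<And>q m. m < n \<Longrightarrow> q 0 = p 0 \<Longrightarrow> q m = p n \<Longrightarrow> \<not> walk_through E W q m"
    and "k \<le> n" "l \<le> n"
  shows "E (p k) (p l) \<longleftrightarrow> l = Suc k \<or> k = Suc l"
proof -
  have sym: "\<And>x y. E x y \<Longrightarrow> E y x" and irr: "\<And>x. \<not> E x x"
    using assms(1) unfolding simple_graph_def by blast+
  have no_chord: "\<not> E (p i) (p j)" if "Suc i < j" "j \<le> n" for i j
  proof
    assume "E (p i) (p j)"
    define d where "d = j - Suc i"
    have "walk_through E W (\<lambda>k. if k \<le> i then p k else p (k + d)) (n - d)"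
      unfolding d_def using that by (intro walk_through_shortcut[OF walk _ that(2) \<open>E (p i) (p j)\<close>]) simp
    moreover have "n - d < n" and "i < n - d" and "n - d + d = n"
      using that unfolding d_def by linarith+
    ultimately show False
      using shortest[of "n - d" "\<lambda>k. if k \<le> i then p k else p (k + d)"] by simp
  qed
  show ?thesis
  proof
    assume "E (p k) (p l)"
    then show "l = Suc k \<or> k = Suc l"
      using no_chord[of k l] no_chord[of l k] assms(4,5) sym irr
      by (metis Suc_lessI linorder_neqE_nat)
  next
    assume "l = Suc k \<or> k = Suc l"
    then show "E (p k) (p l)"
      using walk assms(4,5) sym unfolding walk_through_def by auto
  qed
qed

lemma shortest_walk_through_inj:
  assumes "simple_graph V E" and walk: "walk_through E W p n"
    and shortest: "\<And>q m. m < n \<Longrightarrow> q 0 = p 0 \<Longrightarrow> q m = p n \<Longrightarrow> \<not> walk_through E W q m"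
  shows "inj_on p {..n}"
proof -
  have distinct: "p i \<noteq> p j" if "i < j" "j \<le> n" for i j
  proof
    assume eq: "p i = p j"
    show False
    proof (cases "j = n")
      case True
      then show False
        using shortest[of i p] walk_through_prefix[OF walk] that eq by simp
    next
      case False
      then have chord: "E (p i) (p (Suc j))" and "Suc j \<le> n"
        using walk that eq unfolding walk_through_def by auto
      moreover have "i \<le> n"
        using that by simp
      ultimately have "Suc j = Suc i \<or> i = Suc (Suc j)"
        using shortest_walk_through_chordless[OF assms] by blast
      with that show False
        by linarith
    qed
  qed
  show ?thesis
  proof (rule inj_onI)
    fix i j assume "i \<in> {..n}" "j \<in> {..n}" "p i = p j"
    then show "i = j"
      using distinct[of i j] distinct[of j i] by (cases i j rule: linorder_cases) auto
  qed
qed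

lemma induced_cycle_apex_path:
  assumes "simple_graph V E" and "2 \<le> n" and "inj_on p {..n}" and "v \<notin> p ` {..n}"
    and path: "\<And>k l. k \<le> n \<Longrightarrow> l \<le> n \<Longrightarrow> E (p k) (p l) \<longleftrightarrow> l = Suc k \<or> k = Suc l"
    and apex: "\<And>k. k \<le> n \<Longrightarrow> E v (p k) \<longleftrightarrow> k = 0 \<or> k = n"
  shows "induced_cycle V E (v # map p [0..<Suc n])"
proof -
  have sym: "\<And>x y. E x y \<Longrightarrow> E y x" and irr: "\<And>x. \<not> E x x"
    and EV: "\<And>x y. E x y \<Longrightarrow> x \<in> V \<and> y \<in> V"
    using assms(1) unfolding simple_graph_def by blast+
  define xs where "xs = v # map p [0..<Suc n]"
  define q where "q = case_nat v p"
  have len: "length xs = Suc (Suc n)"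
    unfolding xs_def by simp
  have nth: "xs ! i = q i" if "i < Suc (Suc n)" for i
    using that unfolding xs_def q_def by (cases i) (simp_all del: upt_Suc)
  have "distinct xs"
    using assms(3,4) unfolding xs_def
    by (simp add: distinct_map atLeast0LessThan lessThan_Suc_atMost del: upt_Suc)
  moreover have "set xs \<subseteq> V"
  proof -
    have "p k \<in> V" if "k \<le> n" for k
    proof (cases "k < n")
      case True
      then show ?thesis
        using path[of k "Suc k"] EV by simp
    next
      case False
      then show ?thesis
        using that apex[of k] EV by simp
    qed
    moreover have "v \<in> V"
      using apex[of 0] EV by simp
    ultimately show ?thesis
      unfolding xs_def by (auto simp del: upt_Suc)
  qed
  moreover have "E (q i) (q j) \<longleftrightarrow> j = Suc i mod Suc (Suc n) \<or> i = Suc j mod Suc (Suc n)"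
    if ij: "i < Suc (Suc n)" "j < Suc (Suc n)" for i j
  proof -
    have mod_Suc_Suc: "Suc (Suc l) mod Suc (Suc n) = (if l = n then 0 else Suc (Suc l))" if "l \<le> n" for l
      using that by (simp add: mod_Suc)
    consider "i = 0" "j = 0" | l where "i = 0" "j = Suc l" "l \<le> n" | k where "i = Suc k" "j = 0" "k \<le> n"
      | k l where "i = Suc k" "j = Suc l" "k \<le> n" "l \<le> n"
      using ij by (cases i; cases j) auto
    then show ?thesis
    proof cases
      case 1
      then show ?thesis
        unfolding q_def using irr by simp
    next
      case (2 l)
      then show ?thesis
        unfolding q_def using apex[of l] assms(2) by (auto simp: mod_Suc_Suc)
    next
      case (3 k)
      then show ?thesis
        unfolding q_def using apex[of k] sym assms(2) by (auto simp: mod_Suc_Suc)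
    next
      case (4 k l)
      then show ?thesis
        unfolding q_def using path[of k l] by (auto simp: mod_Suc_Suc)
    qed
  qed
  ultimately show ?thesis
    unfolding induced_cycle_def xs_def[symmetric] len using nth assms(2) by auto
qed

lemma walk_through_if_rtranclp:
  assumes "(induced_edges E W)\<^sup>*\<^sup>* c d" and "E a c" and "c \<in> W" and "E d b"
  shows "\<exists>p n. p 0 = a \<and> p n = b \<and> walk_through E W p n"
  using assms
proof (induction arbitrary: a rule: converse_rtranclp_induct)
  case base
  have "walk_through E W (\<lambda>_. b) 0"
    by (simp add: walk_through_def)
  then have "walk_through E W (case_nat d (\<lambda>_. b)) (Suc 0)"
    by (rule walk_through_Cons) (use base.prems(3) in simp_all)
  then have "walk_through E W (case_nat a (case_nat d (\<lambda>_. b))) (Suc (Suc 0))"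
    by (rule walk_through_Cons) (use base.prems(1,2) in simp_all)
  then show ?case
    by (intro exI[of _ "case_nat a (case_nat d (\<lambda>_. b))"] exI[of _ "Suc (Suc 0)"]) simp
next
  case (step c c')
  then obtain p n where p: "p 0 = c" "p n = b" "walk_through E W p n"
    by blast
  from p(3) have "walk_through E W (case_nat a p) (Suc n)"
    by (rule walk_through_Cons) (use p(1) step.hyps(1) step.prems(1) in simp_all)
  with p show ?case
    by (intro exI[of _ "case_nat a p"] exI[of _ "Suc n"]) simp
qed

lemma chordal_neighbours_walk_adjacent:
  assumes simple: "simple_graph V E" and "chordal V E"
    and walk: "walk_through E W p n" and "E v (p 0)" and "E v (p n)" and "p 0 \<noteq> p n"
    and W: "\<And>x. x \<in> W \<Longrightarrow> x \<noteq> v \<and> \<not> E v x"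
  shows "E (p 0) (p n)"
proof (rule ccontr)
  assume nonadj: "\<not> E (p 0) (p n)"
  have irr: "\<And>x. \<not> E x x"
    using simple unfolding simple_graph_def by blast
  define connects where "connects m \<longleftrightarrow> (\<exists>q. q 0 = p 0 \<and> q m = p n \<and> walk_through E W q m)" for m
  define m where "m = (LEAST m. connects m)"
  have "connects n"
    unfolding connects_def using walk by blast
  then have "connects m"
    unfolding m_def by (rule LeastI)
  then obtain q where q: "q 0 = p 0" "q m = p n" "walk_through E W q m"
    unfolding connects_def by blast
  have shortest: "\<not> walk_through E W q' m'" if "m' < m" "q' 0 = q 0" "q' m' = q m" for q' m'
  proof -
    have "\<not> connects m'"
      using that(1) unfolding m_def by (rule not_less_Least)
    with that(2,3) q(1,2) show ?thesis
      unfolding connects_def by auto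
  qed
  have "2 \<le> m"
  proof (rule ccontr)
    assume "\<not> 2 \<le> m"
    then have "m = 0 \<or> m = 1"
      by linarith
    then show False
      using q nonadj assms(6) unfolding walk_through_def by auto
  qed
  have interior: "q k \<in> W" if "0 < k" "k < m" for k
    using q(3) that unfolding walk_through_def by blast
  have "v \<notin> q ` {..m}"
  proof
    assume "v \<in> q ` {..m}"
    then obtain k where "k \<le> m" "q k = v"
      by blast
    then show False
      using interior[of k] W q(1,2) assms(4,5) irr by (cases "k = 0 \<or> k = m") auto
  qed
  moreover have "E v (q k) \<longleftrightarrow> k = 0 \<or> k = m" if "k \<le> m" for k
    using interior[of k] W q(1,2) assms(4,5) that by (cases "k = 0 \<or> k = m") auto
  moreover have "inj_on q {..m}"
    by (rule shortest_walk_through_inj[OF simple q(3) shortest])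
  moreover have "E (q k) (q l) \<longleftrightarrow> l = Suc k \<or> k = Suc l" if "k \<le> m" "l \<le> m" for k l
    by (rule shortest_walk_through_chordless[OF simple q(3) shortest that])
  ultimately have "induced_cycle V E (v # map q [0..<Suc m])"
    by (intro induced_cycle_apex_path[OF simple \<open>2 \<le> m\<close>])
  moreover have "length (v # map q [0..<Suc m]) \<ge> 4"
    using \<open>2 \<le> m\<close> by simp
  ultimately show False
    using assms(2) unfolding chordal_def by blast
qed

section \<open>Core vertices of connected chordal graphs\<close>

lemma card_Int_Union_mono:
  assumes "finite A" and "finite B" and "finite T" and "pairwise disjnt T"
    and le: "\<And>C. C \<in> T \<Longrightarrow> card (A \<inter> C) \<le> card (B \<inter> C)"
  shows "card (A \<inter> \<Union>T) \<le> card (B \<inter> \<Union>T)"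
proof -
  have split: "card (X \<inter> \<Union>T) = (\<Sum>C\<in>T. card (X \<inter> C))" if "finite X" for X
  proof -
    have "X \<inter> \<Union>T = (\<Union>C\<in>T. X \<inter> C)"
      by blast
    also have "card \<dots> = (\<Sum>C\<in>T. card (X \<inter> C))"
      by (rule card_UN_disjoint) (use assms(3,4) that in \<open>auto simp: pairwise_def disjnt_def\<close>)
    finally show ?thesis .
  qed
  show ?thesis
    unfolding split[OF assms(1)] split[OF assms(2)] by (rule sum_mono) (rule le)
qed

lemma rtranclp_exit_edge:
  assumes "E\<^sup>*\<^sup>* a b" and "a \<in> W" and "b \<notin> W"
  shows "\<exists>x y. (induced_edges E W)\<^sup>*\<^sup>* a x \<and> x \<in> W \<and> y \<notin> W \<and> E x y"
  using assms
proof (induction rule: converse_rtranclp_induct)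
  case base
  then show ?case
    by simp
next
  case (step a a')
  show ?case
  proof (cases "a' \<in> W")
    case True
    with step obtain x y where x: "(induced_edges E W)\<^sup>*\<^sup>* a' x" "x \<in> W" "y \<notin> W" "E x y"
      by blast
    have "induced_edges E W a a'"
      using step.hyps(1) step.prems(1) True by simp
    from converse_rtranclp_into_rtranclp[OF this x(1)] x(2-4) show ?thesis
      by blast
  next
    case False
    then show ?thesis
      using step.hyps(1) step.prems(1) by blast
  qed
qed

definition reach_within :: "('a \<Rightarrow> 'a \<Rightarrow> bool) \<Rightarrow> 'a set \<Rightarrow> 'a rel" where
  "reach_within E W = {(x, y). x \<in> W \<and> (induced_edges E W)\<^sup>*\<^sup>* x y}"

lemma equiv_reach_within:
  assumes "\<And>x y. E x y \<Longrightarrow> E y x"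
  shows "equiv W (reach_within E W)"
proof -
  have stays: "y \<in> W" if "(induced_edges E W)\<^sup>*\<^sup>* x y" "x \<in> W" for x y
    using that by (induction rule: rtranclp_induct) auto
  have "symp (induced_edges E W)\<^sup>*\<^sup>*"
    by (rule symp_rtranclp) (auto intro: sympI assms)
  then show ?thesis
    unfolding equiv_def refl_on_def sym_def trans_def reach_within_def
    by (auto dest: stays sympD intro: rtranclp_trans)
qed

locale chordal_core_vertex =
  fixes V :: "'a set" and E :: "'a \<Rightarrow> 'a \<Rightarrow> bool" and v :: 'a
  assumes simple: "simple_graph V E" and connected: "connected_graph V E" and chordal: "chordal V E"
    and two_vertices: "card V \<ge> 2" and v_core: "v \<in> core V E"
begin

lemma finite_V: "finite V"
  and edge_sym: "E x y \<Longrightarrow> E y x"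
  and edge_irrefl: "\<not> E x x"
  and edge_in_V: "E x y \<Longrightarrow> x \<in> V \<and> y \<in> V"
  using simple unfolding simple_graph_def by blast+

lemma v_in_V: "v \<in> V"
  using v_core unfolding core_def by blast

definition far :: "'a set" where
  "far = V - {v} - {x. E v x}"

definition components :: "'a set set" where
  "components = far // reach_within E far"

definition attachments :: "'a set \<Rightarrow> 'a set" where
  "attachments C = {x. E v x \<and> (\<exists>c\<in>C. E x c)}"

lemma far_not_adjacent: "x \<in> far \<Longrightarrow> x \<noteq> v \<and> \<not> E v x"
  unfolding far_def by blast

lemma domination_number_less_card_if_avoids:
  assumes "dominating V E X" and "v \<notin> X"
  shows "domination_number V E < card X"
proof -
  have "\<not> mds V E X"
    using assms(2) v_core unfolding core_def by blast
  then show ?thesis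
    using assms(1) mds_if_card_le[OF finite_V] by (meson not_less)
qed

lemma domination_number_le_card_dominating_del:
  assumes "dominating (V - {v}) (del_vertex_edges E v) Y"
  shows "domination_number V E \<le> card Y"
proof -
  have "\<not> V \<subseteq> {v}"
  proof
    assume "V \<subseteq> {v}"
    then have "card V \<le> card {v}"
      by (rule card_mono[rotated]) simp
    with two_vertices show False
      by simp
  qed
  then obtain y where "y \<in> V" "y \<noteq> v"
    by blast
  then have "E\<^sup>*\<^sup>* v y"
    using connected v_in_V unfolding connected_graph_def by blast
  then obtain w where vw: "E v w"
    using \<open>y \<noteq> v\<close> by (cases rule: converse_rtranclpE) auto
  have Y: "Y \<subseteq> V - {v}" "\<And>x. x \<in> V - {v} \<Longrightarrow> x \<in> Y \<or> (\<exists>y\<in>Y. E x y)"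
    using assms unfolding dominating_del_vertex_iff by blast+
  then have "dominating V E (insert w Y)"
    using vw edge_in_V unfolding dominating_def by blast
  moreover have "v \<notin> insert w Y"
    using Y(1) vw edge_irrefl by blast
  ultimately have "domination_number V E < card (insert w Y)"
    by (rule domination_number_less_card_if_avoids)
  moreover have "finite Y"
    using assms finite_V unfolding dominating_del_vertex_iff by (auto intro: finite_subset)
  ultimately show ?thesis
    by (simp add: card_insert_if split: if_splits)
qed

lemma small_dominating_del_subset_far:
  assumes "dominating (V - {v}) (del_vertex_edges E v) Y" and "card Y \<le> domination_number V E"
  shows "Y \<subseteq> far"
proof
  fix y assume "y \<in> Y"
  have Y: "Y \<subseteq> V - {v}" "\<And>x. x \<in> V - {v} \<Longrightarrow> x \<in> Y \<or> (\<exists>y\<in>Y. E x y)"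
    using assms(1) unfolding dominating_del_vertex_iff by blast+
  have "\<not> E v y"
  proof
    assume "E v y"
    with \<open>y \<in> Y\<close> Y have "dominating V E Y"
      unfolding dominating_def by blast
    with Y(1) have "domination_number V E < card Y"
      by (intro domination_number_less_card_if_avoids) auto
    with assms(2) show False
      by simp
  qed
  with \<open>y \<in> Y\<close> Y(1) show "y \<in> far"
    unfolding far_def by blast
qed

lemma equiv_far: "equiv far (reach_within E far)"
  by (rule equiv_reach_within) (rule edge_sym)

lemma finite_far: "finite far"
  using finite_V unfolding far_def by simp

lemma finite_components: "finite components"
  unfolding components_def using finite_far equiv_far
  by (intro finite_quotient) (auto simp: equiv_def)

lemma components_subset: "C \<in> components \<Longrightarrow> C \<subseteq> far"
  unfolding components_def using equiv_far by (auto dest: in_quotient_imp_subset)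

lemma pairwise_disjnt_components: "pairwise disjnt components"
  unfolding components_def pairwise_def disjnt_def using equiv_far quotient_disj by blast

lemma component_of:
  assumes "x \<in> far"
  obtains C where "C \<in> components" and "x \<in> C"
proof
  show "reach_within E far `` {x} \<in> components"
    unfolding components_def using assms by (rule quotientI)
  show "x \<in> reach_within E far `` {x}"
    using equiv_far assms by (rule equiv_class_self)
qed

lemma component_unique: "C \<in> components \<Longrightarrow> C' \<in> components \<Longrightarrow> x \<in> C \<Longrightarrow> x \<in> C' \<Longrightarrow> C = C'"
  using pairwise_disjnt_components unfolding pairwise_def disjnt_def by blast

lemma component_connected:
  assumes "C \<in> components" and "x \<in> C" and "y \<in> C"
  shows "(induced_edges E far)\<^sup>*\<^sup>* x y"
proof -
  have "(x, y) \<in> reach_within E far"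
    using quotient_eq_iff[OF equiv_far, of C C x y] assms unfolding components_def by blast
  then show ?thesis
    unfolding reach_within_def by blast
qed

lemma component_closed:
  assumes "C \<in> components" and "x \<in> C" and "y \<in> far" and "E x y"
  shows "y \<in> C"
proof -
  obtain c where C: "C = reach_within E far `` {c}" and "c \<in> far"
    using assms(1) unfolding components_def by (rule quotientE)
  have "(c, x) \<in> reach_within E far"
    using assms(2) C by blast
  moreover have "(x, y) \<in> reach_within E far"
    using assms(1-4) components_subset unfolding reach_within_def by blast
  ultimately have "(c, y) \<in> reach_within E far"
    using equiv_far unfolding equiv_def trans_def by blast
  then show ?thesis
    using C by blast
qed

lemma attachments_adjacent:
  assumes "C \<in> components" and "x \<in> attachments C" and "x' \<in> attachments C" and "x \<noteq> x'"
  shows "E x x'"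
proof -
  obtain c c' where "c \<in> C" "E x c" "c' \<in> C" "E x' c'"
    using assms(2,3) unfolding attachments_def by blast
  then have "\<exists>p n. p 0 = x \<and> p n = x' \<and> walk_through E far p n"
    using component_connected[OF assms(1)] components_subset[OF assms(1)] edge_sym
    by (intro walk_through_if_rtranclp[where c = c and d = c']) auto
  then obtain p n where "p 0 = x" "p n = x'" "walk_through E far p n"
    by blast
  then show ?thesis
    using chordal_neighbours_walk_adjacent[OF simple chordal, of far p n v] assms(2-4) far_not_adjacent
    unfolding attachments_def by auto
qed

lemma attachments_nonempty:
  assumes "C \<in> components"
  obtains w where "w \<in> attachments C"
proof -
  obtain c where C: "C = reach_within E far `` {c}" and "c \<in> far"
    using assms unfolding components_def by (rule quotientE)
  have "E\<^sup>*\<^sup>* c v"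
    using connected v_in_V \<open>c \<in> far\<close> unfolding connected_graph_def far_def by blast
  then obtain x y where "(induced_edges E far)\<^sup>*\<^sup>* c x" "x \<in> far" "y \<notin> far" "E x y"
    using rtranclp_exit_edge[of E c v far] \<open>c \<in> far\<close> far_not_adjacent by blast
  moreover from this have "x \<in> C"
    using C \<open>c \<in> far\<close> unfolding reach_within_def by blast
  moreover have "E v y"
    using \<open>x \<in> far\<close> \<open>y \<notin> far\<close> \<open>E x y\<close> edge_in_V far_not_adjacent edge_sym unfolding far_def by blast
  ultimately have "y \<in> attachments C"
    unfolding attachments_def using edge_sym by blast
  then show ?thesis
    by (rule that)
qed

definition unattached :: "'a set \<Rightarrow> 'a set set" where
  "unattached D = {C \<in> components. D \<inter> attachments C = {}}"

definition exchange :: "'a set \<Rightarrow> 'a set \<Rightarrow> 'a set" where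
  "exchange Y D = (Y \<inter> \<Union>(unattached D)) \<union> (D - \<Union>(unattached D) - {v})"

lemma Union_unattached_subset_far: "\<Union>(unattached D) \<subseteq> far"
  unfolding unattached_def using components_subset by blast

lemma not_in_Union_unattached:
  "C \<in> components \<Longrightarrow> C \<notin> unattached D \<Longrightarrow> x \<in> C \<Longrightarrow> x \<notin> \<Union>(unattached D)"
  unfolding unattached_def using component_unique by blast

lemma dominating_del_within_component:
  assumes "dominating (V - {v}) (del_vertex_edges E v) Y" and "Y \<subseteq> far"
    and "C \<in> components" and "x \<in> C"
  shows "x \<in> Y \<or> (\<exists>y\<in>Y \<inter> C. E x y)"
proof -
  have "x \<in> V - {v}"
    using assms(3,4) components_subset unfolding far_def by blast
  then have "x \<in> Y \<or> (\<exists>y\<in>Y. E x y)"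
    using assms(1) unfolding dominating_del_vertex_iff by blast
  then show ?thesis
    using component_closed[OF assms(3,4)] assms(2) by blast
qed

lemma dominating_within_unattached:
  assumes "dominating V E D" and "C \<in> unattached D" and "x \<in> C"
  shows "x \<in> D \<or> (\<exists>y\<in>D \<inter> C. E x y)"
proof -
  have C: "C \<in> components" and no_attachment: "D \<inter> attachments C = {}"
    using assms(2) unfolding unattached_def by blast+
  have "x \<in> far"
    using C assms(3) components_subset by blast
  then have "x \<in> V"
    unfolding far_def by blast
  have "y \<in> C" if "y \<in> D" "E x y" for y
  proof -
    have "y \<notin> attachments C"
      using that(1) no_attachment by blast
    then have "y \<in> far"
      using that(2) assms(3) \<open>x \<in> far\<close> edge_in_V far_not_adjacent edge_sym
      unfolding far_def attachments_def by blast
    then show ?thesis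
      using component_closed[OF C assms(3)] that(2) by blast
  qed
  with \<open>x \<in> V\<close> assms(1) show ?thesis
    unfolding dominating_def by blast
qed

lemma dominating_component_swap:
  assumes Y: "dominating (V - {v}) (del_vertex_edges E v) Y" and "Y \<subseteq> far"
    and D: "dominating V E D" and C: "C \<in> unattached D" and w: "w \<in> attachments C"
  shows "dominating V E ((Y - C) \<union> (D \<inter> C) \<union> {w})"
proof -
  have "C \<in> components"
    using C unfolding unattached_def by blast
  have "E v w"
    using w unfolding attachments_def by blast
  have "x \<in> (Y - C) \<union> (D \<inter> C) \<union> {w} \<or> (\<exists>y\<in>(Y - C) \<union> (D \<inter> C) \<union> {w}. E x y)" if "x \<in> V" for x
  proof -
    consider "x = v" | "E v x" | "x \<in> far"
      using \<open>x \<in> V\<close> unfolding far_def by blast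
    then show ?thesis
    proof cases
      case 1
      with \<open>E v w\<close> show ?thesis
        by blast
    next
      case 2
      then have "x \<notin> Y" and "x \<noteq> v"
        using \<open>Y \<subseteq> far\<close> far_not_adjacent edge_irrefl by blast+
      then obtain y where "y \<in> Y" "E x y"
        using Y \<open>x \<in> V\<close> unfolding dominating_del_vertex_iff by blast
      show ?thesis
      proof (cases "y \<in> C")
        case True
        with 2 \<open>E x y\<close> have "x \<in> attachments C"
          unfolding attachments_def by blast
        then show ?thesis
          using attachments_adjacent[OF \<open>C \<in> components\<close> _ w] by blast
      next
        case False
        with \<open>y \<in> Y\<close> \<open>E x y\<close> show ?thesis
          by blast
      qed
    next
      case 3
      then obtain C' where C': "C' \<in> components" "x \<in> C'"
        by (rule component_of)
      show ?thesis
      proof (cases "C' = C")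
        case True
        then show ?thesis
          using dominating_within_unattached[OF D C] C'(2) by blast
      next
        case False
        then have "C' \<inter> C = {}"
          using component_unique[OF C'(1) \<open>C \<in> components\<close>] by blast
        then show ?thesis
          using dominating_del_within_component[OF Y \<open>Y \<subseteq> far\<close> C'] C'(2) by blast
      qed
    qed
  qed
  moreover have "(Y - C) \<union> (D \<inter> C) \<union> {w} \<subseteq> V"
    using \<open>Y \<subseteq> far\<close> D \<open>E v w\<close> edge_in_V unfolding far_def dominating_def by blast
  ultimately show ?thesis
    unfolding dominating_def by blast
qed

lemma card_Int_unattached_le:
  assumes Y: "dominating (V - {v}) (del_vertex_edges E v) Y" and "card Y \<le> domination_number V E"
    and D: "dominating V E D" and C: "C \<in> unattached D"
  shows "card (Y \<inter> C) \<le> card (D \<inter> C)"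
proof -
  have "Y \<subseteq> far"
    using small_dominating_del_subset_far assms(1,2) .
  have "C \<in> components"
    using C unfolding unattached_def by blast
  obtain w where w: "w \<in> attachments C"
    using attachments_nonempty[OF \<open>C \<in> components\<close>] .
  have "v \<notin> (Y - C) \<union> (D \<inter> C) \<union> {w}"
    using \<open>Y \<subseteq> far\<close> components_subset[OF \<open>C \<in> components\<close>] far_not_adjacent w edge_irrefl
    unfolding attachments_def by blast
  with dominating_component_swap[OF Y \<open>Y \<subseteq> far\<close> D C w]
  have "domination_number V E < card ((Y - C) \<union> (D \<inter> C) \<union> {w})"
    by (rule domination_number_less_card_if_avoids)
  also have "\<dots> \<le> card (Y - C) + card (D \<inter> C) + 1"
    using card_Un_le[of "(Y - C) \<union> (D \<inter> C)" "{w}"] card_Un_le[of "Y - C" "D \<inter> C"] by simp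
  also have "card (Y - C) = card Y - card (Y \<inter> C)"
    using finite_subset[OF \<open>Y \<subseteq> far\<close> finite_far] by (simp add: card_Diff_subset_Int)
  finally have "domination_number V E < card Y - card (Y \<inter> C) + card (D \<inter> C) + 1" .
  moreover have "card (Y \<inter> C) \<le> card Y"
    using finite_subset[OF \<open>Y \<subseteq> far\<close> finite_far] by (simp add: card_mono)
  ultimately show ?thesis
    using assms(2) by linarith
qed

lemma dominating_del_exchange:
  assumes Y: "dominating (V - {v}) (del_vertex_edges E v) Y" and "Y \<subseteq> far"
    and D: "dominating V E D"
  shows "dominating (V - {v}) (del_vertex_edges E v) (exchange Y D)"
proof -
  have "x \<in> exchange Y D \<or> (\<exists>y\<in>exchange Y D. E x y)" if x: "x \<in> V - {v}" for x
  proof (cases "E v x")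
    case True
    then have "x \<notin> Y"
      using \<open>Y \<subseteq> far\<close> far_not_adjacent by blast
    then obtain y where "y \<in> Y" "E x y"
      using Y x unfolding dominating_del_vertex_iff by blast
    obtain C where C: "C \<in> components" "y \<in> C"
      using component_of \<open>y \<in> Y\<close> \<open>Y \<subseteq> far\<close> by blast
    show ?thesis
    proof (cases "C \<in> unattached D")
      case True
      with C \<open>y \<in> Y\<close> \<open>E x y\<close> show ?thesis
        unfolding exchange_def by blast
    next
      case False
      then obtain t where "t \<in> D" "t \<in> attachments C"
        using C(1) unfolding unattached_def by blast
      moreover have "x \<in> attachments C"
        using \<open>E v x\<close> \<open>E x y\<close> C(2) unfolding attachments_def by blast
      ultimately have "x = t \<or> E x t"
        using attachments_adjacent[OF C(1)] by blast
      moreover have "t \<notin> \<Union>(unattached D)" and "t \<noteq> v"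
        using \<open>t \<in> attachments C\<close> Union_unattached_subset_far far_not_adjacent edge_irrefl
        unfolding attachments_def by blast+
      ultimately show ?thesis
        using \<open>t \<in> D\<close> unfolding exchange_def by blast
    qed
  next
    case False
    with x have "x \<in> far"
      unfolding far_def by blast
    then obtain C where C: "C \<in> components" "x \<in> C"
      by (rule component_of)
    show ?thesis
    proof (cases "C \<in> unattached D")
      case True
      then show ?thesis
        using dominating_del_within_component[OF Y \<open>Y \<subseteq> far\<close> C] C(2)
        unfolding exchange_def by blast
    next
      case False
      have "y \<notin> \<Union>(unattached D)" if "E x y" for y
        using component_closed[OF C _ that] not_in_Union_unattached[OF C(1) False]
          Union_unattached_subset_far by blast
      moreover have "y \<noteq> v" if "E x y" for y
        using that \<open>x \<in> far\<close> far_not_adjacent edge_sym by blast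
      moreover have "x \<notin> \<Union>(unattached D)"
        using not_in_Union_unattached[OF C(1) False C(2)] .
      ultimately show ?thesis
        using D x unfolding dominating_def exchange_def by blast
    qed
  qed
  moreover have "exchange Y D \<subseteq> V - {v}"
    using \<open>Y \<subseteq> far\<close> D unfolding exchange_def far_def dominating_def by blast
  ultimately show ?thesis
    unfolding dominating_del_vertex_iff by blast
qed

lemma card_exchange_less:
  assumes "dominating (V - {v}) (del_vertex_edges E v) Y" and "card Y \<le> domination_number V E"
    and D: "dominating V E D" and "v \<in> D"
  shows "card (exchange Y D) < card D"
proof -
  let ?U = "\<Union>(unattached D)"
  have "finite D"
    using D finite_V by (rule dominating_finite[rotated])
  have "card (exchange Y D) \<le> card (Y \<inter> ?U) + card (D - ?U - {v})"
    unfolding exchange_def by (rule card_Un_le)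
  moreover have "card (Y \<inter> ?U) \<le> card (D \<inter> ?U)"
  proof (rule card_Int_Union_mono)
    show "finite Y"
      using small_dominating_del_subset_far[OF assms(1,2)] finite_far by (rule finite_subset)
    show "finite (unattached D)" and "pairwise disjnt (unattached D)"
      unfolding unattached_def using finite_components pairwise_disjnt_components
      by (auto intro: pairwise_subset)
  qed (use \<open>finite D\<close> card_Int_unattached_le[OF assms(1-3)] in auto)
  moreover have "card (D - {v}) = card (D \<inter> ?U) + card (D - ?U - {v})"
  proof -
    have "v \<notin> ?U"
      using Union_unattached_subset_far far_not_adjacent by blast
    then have "D - {v} = (D \<inter> ?U) \<union> (D - ?U - {v})"
      by blast
    also have "card \<dots> = card (D \<inter> ?U) + card (D - ?U - {v})"
      by (rule card_Un_disjoint) (use \<open>finite D\<close> in auto)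
    finally show ?thesis .
  qed
  moreover have "card (D - {v}) < card D"
    using \<open>finite D\<close> \<open>v \<in> D\<close> by (rule card_Diff1_less)
  ultimately show ?thesis
    by linarith
qed

theorem domination_number_less_gamma_del: "domination_number V E < gamma_del V E v"
proof (rule ccontr)
  assume "\<not> domination_number V E < gamma_del V E v"
  obtain Y where Y: "mds (V - {v}) (del_vertex_edges E v) Y"
    using mds_exists[of "V - {v}"] finite_V by blast
  with \<open>\<not> _ < _\<close> have Ydom: "dominating (V - {v}) (del_vertex_edges E v) Y"
    and Ycard: "card Y \<le> domination_number V E"
    unfolding mds_def gamma_del_def by auto
  obtain D where D: "mds V E D"
    using mds_exists[OF finite_V] .
  then have "v \<in> D" and Ddom: "dominating V E D"
    using v_core unfolding core_def mds_def by blast+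
  have "domination_number V E \<le> card (exchange Y D)"
    using dominating_del_exchange[OF Ydom small_dominating_del_subset_far[OF Ydom Ycard] Ddom]
    by (rule domination_number_le_card_dominating_del)
  also have "\<dots> < card D"
    using Ydom Ycard Ddom \<open>v \<in> D\<close> by (rule card_exchange_less)
  finally show False
    using D unfolding mds_def by simp
qed

end

theorem theorem6:
  fixes V :: "'a set" and E :: "'a \<Rightarrow> 'a \<Rightarrow> bool" and v :: 'a
  assumes "simple_graph V E" and "connected_graph V E" and "chordal V E"
    and "card V \<ge> 2" and "v \<in> V"
  shows "(v \<in> core V E \<longleftrightarrow> v \<in> V_plus V E)
    \<and> (\<forall>u. u \<notin> V \<longrightarrow>
         (v \<in> anticore V E \<longleftrightarrow> gamma_pendant V E v u = domination_number V E + 1)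
       \<and> (v \<in> corona V E - core V E \<longleftrightarrow>
            (v \<in> V_minus V E \<or>
             (v \<in> V_zero V E \<and> gamma_pendant V E v u = domination_number V E))))"
proof -
  have "finite V"
    using assms(1) by (rule simple_graph_finite)
  have core: "v \<in> core V E \<longleftrightarrow> domination_number V E < gamma_del V E v"
    using chordal_core_vertex.domination_number_less_gamma_del[of V E v]
      core_if_gamma_del_greater[OF \<open>finite V\<close> assms(5)] assms(1-4)
    unfolding chordal_core_vertex_def by blast
  show ?thesis
  proof (intro conjI allI impI)
    show "v \<in> core V E \<longleftrightarrow> v \<in> V_plus V E"
      using core assms(5) unfolding V_plus_def by simp
    fix u assume "u \<notin> V"
    note pendant = domination_number_le_gamma_pendant[OF assms(1,5) \<open>u \<notin> V\<close>]
      gamma_pendant_le_Suc[OF \<open>finite V\<close>, of E v u]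
      corona_iff_gamma_pendant_eq[OF assms(1,5) \<open>u \<notin> V\<close>]
    show "v \<in> anticore V E \<longleftrightarrow> gamma_pendant V E v u = domination_number V E + 1"
      using pendant assms(5) unfolding anticore_def by auto
    show "v \<in> corona V E - core V E \<longleftrightarrow>
        v \<in> V_minus V E \<or> v \<in> V_zero V E \<and> gamma_pendant V E v u = domination_number V E"
      using core pendant(3) corona_if_gamma_del_less[OF \<open>finite V\<close> assms(5)] assms(5)
      unfolding V_minus_def V_zero_def by (auto simp: not_less)
  qed
qed

end
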